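(* For all integers $n\geq 1$ and $k\geq 1$, $$B_k^e(n)=C_k^e(n+1)\qquad\text{and}\qquad B_k^o(n)=C_k^o(n+1).$$
   Context: All partitions are of positive integers into positive parts unless stated otherwise. $B_k^e(n)$ (resp. $B_k^o(n)$) is the number of partitions of $n$ having at least one odd part, with largest odd part $2\ell-1$, in which every part is odd except for at most $k-1$ even parts. These even parts are pairwise distinct, lie in the interval $[2\ell+2,\,2\ell+2k-2]$, and their number is even (resp. odd). $C_k^e(n)$ (resp. $C_k^o(n)$) is the number of pairs $(\lambda,\ell)$ with $\ell\geq1$ and $\lambda$ a partition of $n$ satisfying three conditions: - $\lambda$ contains the part $2\ell$; - the parts of $\lambda$ not exceeding $\ell$ are pairwise distinct, while parts in $(\ell,2\ell]$ are unrestricted; - the parts of $\lambda$ larger than $2\ell$ are at most $k-1$ pairwise distinct even parts lying in $[2\ell+2,\,2\ell+2k-2]$, and their number is even (resp. odd). Equivalently, $\sum_{n}\big(\sum_m C_{k,m}(n)x^m\big)q^n=\sum_{\ell\ge1}\frac{(-q;q)_\ell(-xq^{2\ell+2};q^2)_{k-1}}{(q^{\ell+1};q)_\ell}q^{2\ell}$, where $C_{k,m}(n)$ counts those pairs with exactly $m$ parts larger than $2\ell$. Then $C_k^e$ and $C_k^o$ collect even and odd $m$ respectively. Here $(a;q)_N=\prod_{i=0}^{N-1}(1-aq^i)$. *)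

theory Defs
  imports Main "HOL-Library.Multiset"
begin

definition partitions :: "nat \<Rightarrow> nat multiset set" where
  "partitions n = {m. (\<forall>x\<in>#m. 0 < x) \<and> sum_mset m = n}"

text \<open>Parameter r selects the parity of the number of even parts (0: even, 1: odd).
  The largest odd part is 2l-1, i.e. l = (largest odd part + 1) div 2.\<close>
definition B_set :: "nat \<Rightarrow> nat \<Rightarrow> nat \<Rightarrow> nat multiset set" where
  "B_set k r n = {m \<in> partitions n.
     (\<exists>x\<in>#m. odd x) \<and>
     (let l = (Max {x \<in> set_mset m. odd x} + 1) div 2 in
        (\<forall>y\<in>#m. even y \<longrightarrow>
            count m y = 1 \<and> 2*l + 2 \<le> y \<and> y \<le> 2*l + 2*k - 2)) \<and>
     size (filter_mset even m) \<le> k - 1 \<and>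
     size (filter_mset even m) mod 2 = r}"

definition B_e :: "nat \<Rightarrow> nat \<Rightarrow> nat" where
  "B_e k n = card (B_set k 0 n)"

definition B_o :: "nat \<Rightarrow> nat \<Rightarrow> nat" where
  "B_o k n = card (B_set k 1 n)"

definition C_set :: "nat \<Rightarrow> nat \<Rightarrow> nat \<Rightarrow> (nat multiset \<times> nat) set" where
  "C_set k r n = {(m, l). 1 \<le> l \<and> m \<in> partitions n \<and>
     2*l \<in># m \<and>
     (\<forall>y\<in>#m. y \<le> l \<longrightarrow> count m y = 1) \<and>
     (\<forall>y\<in>#m. 2*l < y \<longrightarrow>
         even y \<and> count m y = 1 \<and> 2*l + 2 \<le> y \<and> y \<le> 2*l + 2*k - 2) \<and>
     size (filter_mset (\<lambda>y. 2*l < y) m) \<le> k - 1 \<and>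
     size (filter_mset (\<lambda>y. 2*l < y) m) mod 2 = r}"

definition C_e :: "nat \<Rightarrow> nat \<Rightarrow> nat" where
  "C_e k n = card (C_set k 0 n)"

definition C_o :: "nat \<Rightarrow> nat \<Rightarrow> nat" where
  "C_o k n = card (C_set k 1 n)"

end

theory Submission
  imports Defs "HOL-Computational_Algebra.Formal_Power_Series"
begin

unbundle fps_syntax

text \<open>
  Removing the even parts of a partition counted by B, and the parts larger than 2l of a
  pair counted by C, leaves on both sides the same kind of tail: at most k - 1 distinct even
  parts in [2l + 2, 2l + 2k - 2], their number of prescribed parity. It therefore suffices to
  match, for each l, the partitions of N into odd parts with largest part 2l - 1 with the
  partitions of N + 1 with largest part 2l whose parts not exceeding l are distinct. Their
  generating functions are q^(2l-1) \<Prod>(j odd, j < 2l) 1/(1 - q^j) and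
  q^(2l) (-q;q)_l / (q^(l+1);q)_l, which differ by exactly one factor q by the finite form
  \<Prod>(j odd, j < 2l) 1/(1 - q^j) = (-q;q)_l / (q^(l+1);q)_l of Euler's identity, an induction
  on l from (1 + q^j)/(1 - q^(2j)) = 1/(1 - q^j). Equal counts in every degree yield a
  bijection raising the size by one; together with the identity on the tail it is the required
  bijection.
\<close>

lemma filter_mset_eq_self:
  assumes "\<And>x. x \<in># M \<Longrightarrow> P x"
  shows "filter_mset P M = M"
proof -
  have "filter_mset P M = filter_mset (\<lambda>_. True) M"
    using assms by (simp add: filter_mset_cong0)
  then show ?thesis by simp
qed

lemma filter_mset_add_eq_left:
  assumes "\<And>x. x \<in># a \<Longrightarrow> P x" and "\<And>x. x \<in># b \<Longrightarrow> \<not> P x"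
  shows "filter_mset P (a + b) = a"
  using assms by (simp add: filter_mset_eq_self)

lemma member_le_sum_mset:
  fixes x :: "'a :: canonically_ordered_monoid_add"
  shows "x \<in># M \<Longrightarrow> x \<le> sum_mset M"
  by (auto dest!: multi_member_split simp: le_iff_add)

lemma bij_betw_fiberwise:
  assumes bij: "\<And>N. bij_betw (h N) {a \<in> A. f a = N} {b \<in> B. g b = N}"
  shows "bij_betw (\<lambda>a. h (f a) a) A B"
proof -
  have into: "h (f a) a \<in> B \<and> g (h (f a) a) = f a" if "a \<in> A" for a
    using bij_betwE[OF bij[of "f a"]] that by blast
  show ?thesis
  proof (rule bij_betw_imageI)
    show "inj_on (\<lambda>a. h (f a) a) A"
    proof (rule inj_onI)
      fix a a' assume a: "a \<in> A" "a' \<in> A" and eq: "h (f a) a = h (f a') a'"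
      then have "f a = f a'"
        using into by metis
      with a eq show "a = a'"
        using bij_betw_imp_inj_on[OF bij[of "f a"]] by (auto dest: inj_onD)
    qed
    show "(\<lambda>a. h (f a) a) ` A = B"
    proof (intro subset_antisym image_subsetI subsetI)
      fix b assume "b \<in> B"
      then obtain a where "a \<in> A" "f a = g b" "h (g b) a = b"
        using bij_betw_imp_surj_on[OF bij[of "g b"]] by (force simp: image_iff)
      then show "b \<in> (\<lambda>a. h (f a) a) ` A"
        by force
    qed (use into in blast)
  qed
qed

lemma ex_bij_betw_weight_shift:
  fixes f :: "'a \<Rightarrow> nat" and g :: "'b \<Rightarrow> nat"
  assumes "\<And>N. finite {a \<in> A. f a = N}" and "\<And>N. finite {b \<in> B. g b = N}"
    and "\<And>N. card {a \<in> A. f a = N} = card {b \<in> B. g b = N + 1}"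
    and pos: "\<And>b. b \<in> B \<Longrightarrow> 0 < g b"
  shows "\<exists>\<phi>. bij_betw \<phi> A B \<and> (\<forall>a\<in>A. g (\<phi> a) = f a + 1)"
proof -
  have "{b \<in> B. g b - 1 = N} = {b \<in> B. g b = N + 1}" for N
    using pos by (intro Collect_cong) auto
  with assms have "\<forall>N. \<exists>h. bij_betw h {a \<in> A. f a = N} {b \<in> B. g b - 1 = N}"
    by (intro allI finite_same_card_bij) simp_all
  then obtain h where h: "\<forall>N. bij_betw (h N) {a \<in> A. f a = N} {b \<in> B. g b - 1 = N}"
    by (rule choice[THEN exE])
  have "bij_betw (\<lambda>a. h (f a) a) A B"
    by (rule bij_betw_fiberwise) (rule h[rule_format])
  moreover have "g (h (f a) a) = f a + 1" if "a \<in> A" for a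
    using bij_betwE[OF h[rule_format, of "f a"]] that pos by fastforce
  ultimately show ?thesis
    by blast
qed

section \<open>Counting multisets with prescribed multiplicities\<close>

definition msets_with_counts :: "nat set \<Rightarrow> (nat \<Rightarrow> nat set) \<Rightarrow> nat \<Rightarrow> nat multiset set" where
  "msets_with_counts P A n = {m. set_mset m \<subseteq> P \<and> (\<forall>p\<in>P. count m p \<in> A p) \<and> sum_mset m = n}"

lemma msets_with_counts_empty: "msets_with_counts {} A n = (if n = 0 then {{#}} else {})"
  by (auto simp: msets_with_counts_def)

lemma bij_betw_msets_with_counts_insert:
  assumes "p \<notin> P"
  shows "bij_betw (\<lambda>(j, m). m + replicate_mset j p)
           (SIGMA j:{j \<in> A p. p * j \<le> n}. msets_with_counts P A (n - p * j))
           (msets_with_counts (insert p P) A n)"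
proof -
  have partition: "m = {#x \<in># m. x \<noteq> p#} + replicate_mset (count m p) p" for m
    using multiset_partition[of m "\<lambda>x. x \<noteq> p"] by (simp add: filter_eq_replicate_mset)
  have add_inverse: "count (m + replicate_mset j p) p = j \<and> {#x \<in># m + replicate_mset j p. x \<noteq> p#} = m"
    if "m \<in> msets_with_counts P A (n - p * j)" for j m
  proof -
    have "p \<notin># m" using that assms by (auto simp: msets_with_counts_def)
    moreover from this have "{#x \<in># m + replicate_mset j p. x \<noteq> p#} = m"
      by (intro filter_mset_add_eq_left) (auto split: if_splits)
    ultimately show ?thesis by (simp add: not_in_iff)
  qed
  have add_into: "m + replicate_mset j p \<in> msets_with_counts (insert p P) A n"
    if "j \<in> {j \<in> A p. p * j \<le> n}" "m \<in> msets_with_counts P A (n - p * j)" for j m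
  proof -
    have "count m p = 0" using that assms by (auto simp: msets_with_counts_def not_in_iff[symmetric])
    then show ?thesis using that assms by (auto simp: msets_with_counts_def)
  qed
  have remove_into: "count m p \<in> {j \<in> A p. p * j \<le> n} \<and>
      {#x \<in># m. x \<noteq> p#} \<in> msets_with_counts P A (n - p * count m p)"
    if m: "m \<in> msets_with_counts (insert p P) A n" for m
  proof -
    have "sum_mset m = sum_mset {#x \<in># m. x \<noteq> p#} + p * count m p"
      by (subst partition) simp
    then show ?thesis using m assms by (auto simp: msets_with_counts_def)
  qed
  show ?thesis
    by (rule bij_betw_byWitness[where f' = "\<lambda>m. (count m p, {#x \<in># m. x \<noteq> p#})"])
      (use partition add_inverse add_into remove_into in auto)
qed

(* multiples_fps p UNIV stands in for 1/(1 - X^p), which cannot be formed over nat. *)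
definition multiples_fps :: "nat \<Rightarrow> nat set \<Rightarrow> nat fps" where
  "multiples_fps p A = Abs_fps (\<lambda>i. if p dvd i \<and> i div p \<in> A then 1 else 0)"

lemma finite_multiples_le:
  assumes "0 < (p::nat)"
  shows "finite {j \<in> A. p * j \<le> n}"
proof (rule finite_subset)
  show "{j \<in> A. p * j \<le> n} \<subseteq> {..n}"
    using assms by (cases p) auto
qed simp

lemma multiples_fps_mult_nth:
  assumes "0 < p"
  shows "(multiples_fps p A * F) $ n = (\<Sum>j \<in> {j \<in> A. p * j \<le> n}. F $ (n - p * j))"
proof -
  have "(multiples_fps p A * F) $ n = (\<Sum>i=0..n. if p dvd i \<and> i div p \<in> A then F $ (n - i) else 0)"
    unfolding fps_mult_nth by (rule sum.cong) (simp_all add: multiples_fps_def)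
  also have "\<dots> = (\<Sum>i \<in> {i \<in> {0..n}. p dvd i \<and> i div p \<in> A}. F $ (n - i))"
    by (rule sum.inter_filter[symmetric]) simp
  also have "\<dots> = (\<Sum>j \<in> {j \<in> A. p * j \<le> n}. F $ (n - p * j))"
    by (rule sum.reindex_bij_witness[where i = "\<lambda>j. p * j" and j = "\<lambda>i. i div p"]) (use assms in auto)
  finally show ?thesis .
qed

lemma finite_msets_with_counts:
  "finite P \<Longrightarrow> 0 \<notin> P \<Longrightarrow> finite (msets_with_counts P A n)"
proof (induction P arbitrary: n rule: finite_induct)
  case empty
  then show ?case by (simp add: msets_with_counts_empty)
next
  case (insert p P)
  then have "finite (SIGMA j:{j \<in> A p. p * j \<le> n}. msets_with_counts P A (n - p * j))"
    by (intro finite_SigmaI finite_multiples_le) auto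
  then show ?case
    using bij_betw_finite[OF bij_betw_msets_with_counts_insert[OF insert.hyps(2)]] by blast
qed

lemma card_msets_with_counts:
  "finite P \<Longrightarrow> 0 \<notin> P \<Longrightarrow>
     card (msets_with_counts P A n) = (\<Prod>p\<in>P. multiples_fps p (A p)) $ n"
proof (induction P arbitrary: n rule: finite_induct)
  case empty
  then show ?case by (simp add: msets_with_counts_empty)
next
  case (insert p P)
  have p: "0 < p" and P: "0 \<notin> P" using insert.prems by auto
  have "card (msets_with_counts (insert p P) A n)
          = card (SIGMA j:{j \<in> A p. p * j \<le> n}. msets_with_counts P A (n - p * j))"
    using bij_betw_same_card[OF bij_betw_msets_with_counts_insert[OF insert.hyps(2)]] by simp
  also have "\<dots> = (\<Sum>j \<in> {j \<in> A p. p * j \<le> n}. card (msets_with_counts P A (n - p * j)))"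
    using insert.hyps P p by (intro card_SigmaI finite_multiples_le ballI finite_msets_with_counts)
  also have "\<dots> = (multiples_fps p (A p) * (\<Prod>p\<in>P. multiples_fps p (A p))) $ n"
    using insert.IH[OF P] by (simp add: multiples_fps_mult_nth[OF p])
  finally show ?case using insert.hyps by simp
qed

lemma multiples_fps_lessThan_2:
  assumes "0 < p"
  shows "multiples_fps p {..<2} = 1 + fps_X ^ p"
proof (rule fps_ext)
  fix i
  have "p dvd i \<and> i div p < 2 \<longleftrightarrow> i = 0 \<or> i = p"
    using assms by (auto elim!: dvdE simp: less_2_cases_iff)
  then show "multiples_fps p {..<2} $ i = (1 + fps_X ^ p) $ i"
    using assms by (auto simp: multiples_fps_def)
qed

lemma multiples_fps_greaterThan_0:
  assumes "0 < p"
  shows "multiples_fps p {0<..} = fps_X ^ p * multiples_fps p UNIV"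
proof (rule fps_ext)
  fix i
  have "p dvd i \<and> 0 < i div p \<longleftrightarrow> p \<le> i \<and> p dvd i - p"
  proof
    assume "p dvd i \<and> 0 < i div p"
    then show "p \<le> i \<and> p dvd i - p"
      using assms by (auto elim!: dvdE simp: Suc_le_eq diff_mult_distrib2[of p _ 1, simplified])
  next
    assume "p \<le> i \<and> p dvd i - p"
    then obtain k where "i - p = p * k" and "p \<le> i"
      by (auto elim!: dvdE)
    then have "i = p * Suc k"
      by simp
    then show "p dvd i \<and> 0 < i div p"
      using assms by simp
  qed
  then show "multiples_fps p {0<..} $ i = (fps_X ^ p * multiples_fps p UNIV) $ i"
    by (simp add: multiples_fps_def fps_X_power_mult_nth)
qed

section \<open>Euler's identity and the two families of partitions\<close>

lemma one_plus_X_power_mult_multiples_fps_double: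
  assumes "0 < p"
  shows "(1 + fps_X ^ p) * multiples_fps (2 * p) UNIV = multiples_fps p UNIV"
proof (rule fps_ext)
  fix n
  have "((1 + fps_X ^ p) * multiples_fps (2 * p) UNIV) $ n
          = of_bool (2 * p dvd n) + of_bool (p \<le> n \<and> 2 * p dvd n - p)"
    by (simp add: distrib_right fps_X_power_mult_nth multiples_fps_def)
  also have "\<dots> = of_bool (p dvd n)"
  proof (cases "p dvd n")
    case True
    then obtain q where n: "n = p * q" ..
    have dvd_iff: "2 * p dvd p * j \<longleftrightarrow> even j" for j
      using assms by (simp add: mult.commute[of 2])
    have "n - p = p * (q - 1)"
      by (simp add: n diff_mult_distrib2)
    moreover have "p \<le> n \<longleftrightarrow> q \<noteq> 0"
      using assms by (auto simp: n)
    ultimately have "p \<le> n \<and> 2 * p dvd n - p \<longleftrightarrow> odd q"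
      using dvd_iff[of "q - 1"] by (cases q) auto
    then show ?thesis
      using dvd_iff[of q] n True by auto
  next
    case False
    have "\<not> (p \<le> n \<and> 2 * p dvd n - p)"
    proof
      assume "p \<le> n \<and> 2 * p dvd n - p"
      then have "p dvd n"
        by (auto dest: dvd_mult_right intro: dvd_diffD)
      with False show False ..
    qed
    with False show ?thesis
      by (auto dest: dvd_mult_right)
  qed
  also have "\<dots> = multiples_fps p UNIV $ n"
    by (simp add: multiples_fps_def)
  finally show "((1 + fps_X ^ p) * multiples_fps (2 * p) UNIV) $ n = multiples_fps p UNIV $ n" .
qed

lemma prod_multiples_fps_odd:
  "(\<Prod>x | odd x \<and> x < 2 * l. multiples_fps x UNIV)
     = (\<Prod>x\<in>{1..l}. 1 + fps_X ^ x) * (\<Prod>x\<in>{l<..2 * l}. multiples_fps x UNIV)"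
proof (induction l)
  case 0
  then show ?case by simp
next
  case (Suc l)
  let ?G = "\<lambda>x. multiples_fps x UNIV"
  have odd_insert: "{x. odd x \<and> x < 2 * Suc l} = insert (2 * l + 1) {x. odd x \<and> x < 2 * l}"
    by auto presburger
  have top2: "{Suc l<..2 * Suc l} = insert (2 * l + 2) {Suc l<..2 * l + 1}"
    and bottom: "{l<..2 * l + 1} = insert (Suc l) {Suc l<..2 * l + 1}"
    and top1: "{l<..2 * l + 1} = insert (2 * l + 1) {l<..2 * l}"
    and one: "{1..Suc l} = insert (Suc l) {1..l}"
    by auto
  have "(\<Prod>x\<in>{1..Suc l}. 1 + fps_X ^ x) * (\<Prod>x\<in>{Suc l<..2 * Suc l}. ?G x)
      = (\<Prod>x\<in>{1..l}. 1 + fps_X ^ x) * ((1 + fps_X ^ Suc l) * ?G (2 * Suc l))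
          * (\<Prod>x\<in>{Suc l<..2 * l + 1}. ?G x)"
    unfolding top2 one by (simp add: mult_ac)
  also have "\<dots> = (\<Prod>x\<in>{1..l}. 1 + fps_X ^ x) * (\<Prod>x\<in>{l<..2 * l + 1}. ?G x)"
    unfolding one_plus_X_power_mult_multiples_fps_double[OF zero_less_Suc] bottom
    by (simp add: mult_ac)
  also have "\<dots> = ?G (2 * l + 1) * ((\<Prod>x\<in>{1..l}. 1 + fps_X ^ x) * (\<Prod>x\<in>{l<..2 * l}. ?G x))"
    unfolding top1 by (simp add: mult_ac)
  finally show ?case
    unfolding odd_insert by (simp add: Suc.IH)
qed

definition odd_with_max :: "nat \<Rightarrow> nat multiset set" where
  "odd_with_max l = {m. (\<forall>x\<in>#m. odd x \<and> x < 2 * l) \<and> 2 * l - 1 \<in># m}"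

definition distinct_small_with_max :: "nat \<Rightarrow> nat multiset set" where
  "distinct_small_with_max l =
     {m. (\<forall>x\<in>#m. 0 < x \<and> x \<le> 2 * l) \<and> 2 * l \<in># m \<and> (\<forall>y\<in>#m. y \<le> l \<longrightarrow> count m y = 1)}"

lemma odd_with_max_eq_msets_with_counts:
  assumes "1 \<le> l"
  shows "{m \<in> odd_with_max l. sum_mset m = N}
           = msets_with_counts {x. odd x \<and> x < 2 * l} (\<lambda>x. if x = 2 * l - 1 then {0<..} else UNIV) N"
proof -
  have "odd (2 * l - 1) \<and> 2 * l - 1 < 2 * l"
    using assms by auto
  then show ?thesis
    by (auto simp: odd_with_max_def msets_with_counts_def Suc_le_eq)
qed

lemma distinct_small_with_max_eq_msets_with_counts:
  assumes "1 \<le> l"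
  shows "{m \<in> distinct_small_with_max l. sum_mset m = N}
           = msets_with_counts {1..2 * l}
               (\<lambda>x. if x \<le> l then {..<2} else if x = 2 * l then {0<..} else UNIV) N"
  using assms
  by (auto simp: distinct_small_with_max_def msets_with_counts_def less_2_cases_iff count_eq_zero_iff)

lemma finite_odd_with_max_sum:
  "1 \<le> l \<Longrightarrow> finite {m \<in> odd_with_max l. sum_mset m = N}"
  by (simp add: odd_with_max_eq_msets_with_counts finite_msets_with_counts)

lemma finite_distinct_small_with_max_sum:
  "1 \<le> l \<Longrightarrow> finite {m \<in> distinct_small_with_max l. sum_mset m = N}"
  by (simp add: distinct_small_with_max_eq_msets_with_counts finite_msets_with_counts)

lemma card_odd_with_max:
  assumes "1 \<le> l"
  shows "card {m \<in> odd_with_max l. sum_mset m = N}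
           = (fps_X ^ (2 * l - 1) * (\<Prod>x | odd x \<and> x < 2 * l. multiples_fps x UNIV)) $ N"
proof -
  let ?P = "{x. odd x \<and> x < 2 * l}"
  have "(\<Prod>x\<in>?P. multiples_fps x (if x = 2 * l - 1 then {0<..} else UNIV))
          = (\<Prod>x\<in>?P. (if x = 2 * l - 1 then fps_X ^ x else 1) * multiples_fps x UNIV)"
  proof (rule prod.cong)
    fix x assume "x \<in> ?P"
    then have "0 < x" by (simp add: odd_pos)
    then show "multiples_fps x (if x = 2 * l - 1 then {0<..} else UNIV)
                 = (if x = 2 * l - 1 then fps_X ^ x else 1) * multiples_fps x UNIV"
      by (simp add: multiples_fps_greaterThan_0)
  qed simp
  also have "\<dots> = fps_X ^ (2 * l - 1) * (\<Prod>x\<in>?P. multiples_fps x UNIV)"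
    using assms by (simp add: prod.distrib prod.delta)
  finally show ?thesis
    using assms by (simp add: odd_with_max_eq_msets_with_counts card_msets_with_counts)
qed

lemma card_distinct_small_with_max:
  assumes "1 \<le> l"
  shows "card {m \<in> distinct_small_with_max l. sum_mset m = N}
           = (fps_X ^ (2 * l) * (\<Prod>x\<in>{1..l}. 1 + fps_X ^ x)
               * (\<Prod>x\<in>{l<..2 * l}. multiples_fps x UNIV)) $ N"
proof -
  have "(\<Prod>x\<in>{1..2 * l}. multiples_fps x (if x \<le> l then {..<2} else if x = 2 * l then {0<..} else UNIV))
          = (\<Prod>x\<in>{1..2 * l}. (if x = 2 * l then fps_X ^ x else 1)
               * (if x \<le> l then 1 + fps_X ^ x else multiples_fps x UNIV))"
    using assms by (intro prod.cong) (auto simp: multiples_fps_greaterThan_0 multiples_fps_lessThan_2)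
  also have "\<dots> = fps_X ^ (2 * l)
      * ((\<Prod>x\<in>{1..l}. 1 + fps_X ^ x) * (\<Prod>x\<in>{l<..2 * l}. multiples_fps x UNIV))"
  proof -
    have "{1..2 * l} \<inter> {x. x \<le> l} = {1..l}" and "{1..2 * l} \<inter> - {x. x \<le> l} = {l<..2 * l}"
      using assms by auto
    then show ?thesis
      using assms by (simp add: prod.distrib prod.If_cases)
  qed
  finally show ?thesis
    using assms by (simp add: distinct_small_with_max_eq_msets_with_counts card_msets_with_counts mult.assoc)
qed

lemma card_odd_with_max_eq_card_distinct_small_with_max:
  assumes "1 \<le> l"
  shows "card {m \<in> odd_with_max l. sum_mset m = N} = card {m \<in> distinct_small_with_max l. sum_mset m = N + 1}"
proof -
  let ?F = "(\<Prod>x\<in>{1..l}. 1 + fps_X ^ x) * (\<Prod>x\<in>{l<..2 * l}. multiples_fps x UNIV)"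
  have "card {m \<in> odd_with_max l. sum_mset m = N} = (fps_X * (fps_X ^ (2 * l - 1) * ?F)) $ (N + 1)"
    using assms by (simp add: card_odd_with_max prod_multiples_fps_odd)
  also have "fps_X * (fps_X ^ (2 * l - 1) * ?F) = fps_X ^ (2 * l) * ?F"
    using assms by (simp flip: power_Suc mult.assoc)
  finally show ?thesis
    using assms by (simp add: card_distinct_small_with_max mult.assoc)
qed

lemma obtain_bij_odd_with_max_distinct_small_with_max:
  obtains \<phi> where
    "\<And>l. 1 \<le> l \<Longrightarrow> bij_betw (\<phi> l) (odd_with_max l) (distinct_small_with_max l)"
    "\<And>l a. 1 \<le> l \<Longrightarrow> a \<in> odd_with_max l \<Longrightarrow> sum_mset (\<phi> l a) = sum_mset a + 1"
proof -
  have "\<exists>\<phi>. bij_betw \<phi> (odd_with_max l) (distinct_small_with_max l)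
          \<and> (\<forall>a \<in> odd_with_max l. sum_mset (\<phi> a) = sum_mset a + 1)" if l: "1 \<le> l" for l
  proof (rule ex_bij_betw_weight_shift)
    fix d assume "d \<in> distinct_small_with_max l"
    then show "0 < sum_mset d"
      using member_le_sum_mset[of "2 * l" d] l by (simp add: distinct_small_with_max_def)
  qed (use l in \<open>simp_all add: finite_odd_with_max_sum finite_distinct_small_with_max_sum
        card_odd_with_max_eq_card_distinct_small_with_max\<close>)
  then have "\<forall>l. \<exists>\<phi>. 1 \<le> l \<longrightarrow> bij_betw \<phi> (odd_with_max l) (distinct_small_with_max l)
               \<and> (\<forall>a \<in> odd_with_max l. sum_mset (\<phi> a) = sum_mset a + 1)"
    by blast
  then obtain \<phi> where "\<forall>l. 1 \<le> l \<longrightarrow> bij_betw (\<phi> l) (odd_with_max l) (distinct_small_with_max l)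
               \<and> (\<forall>a \<in> odd_with_max l. sum_mset (\<phi> l a) = sum_mset a + 1)"
    by (rule choice[THEN exE])
  then show ?thesis
    using that by blast
qed

section \<open>Splitting off the parts above 2l\<close>

definition even_tails :: "nat \<Rightarrow> nat \<Rightarrow> nat \<Rightarrow> nat multiset set" where
  "even_tails l k r =
     {e. (\<forall>y\<in>#e. even y \<and> count e y = 1 \<and> 2 * l + 2 \<le> y \<and> y \<le> 2 * l + 2 * k - 2)
         \<and> size e \<le> k - 1 \<and> size e mod 2 = r}"

definition decompositions ::
    "(nat \<Rightarrow> nat multiset set) \<Rightarrow> nat \<Rightarrow> nat \<Rightarrow> nat \<Rightarrow>
       (nat \<times> nat multiset \<times> nat multiset) set" where
  "decompositions X k r n =
     {(l, x, e). 1 \<le> l \<and> x \<in> X l \<and> e \<in> even_tails l k r \<and> sum_mset x + sum_mset e = n}"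

lemma card_decompositions_shift:
  assumes bij: "\<And>l. 1 \<le> l \<Longrightarrow> bij_betw (\<phi> l) (X l) (Y l)"
    and shift: "\<And>l x. 1 \<le> l \<Longrightarrow> x \<in> X l \<Longrightarrow> sum_mset (\<phi> l x) = sum_mset x + 1"
  shows "card (decompositions X k r n) = card (decompositions Y k r (n + 1))"
proof (rule bij_betw_same_card)
  let ?\<psi> = "\<lambda>l. inv_into (X l) (\<phi> l)"
  have left: "?\<psi> l (\<phi> l x) = x" and into: "\<phi> l x \<in> Y l"
    if "1 \<le> l" "x \<in> X l" for l x
    using bij_betw_inv_into_left[OF bij that(2)] bij_betwE[OF bij] that by blast+
  have right: "\<phi> l (?\<psi> l y) = y" and inv_into_X: "?\<psi> l y \<in> X l"
    if "1 \<le> l" "y \<in> Y l" for l y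
    using bij_betw_inv_into_right[OF bij that(2)] bij_betwE[OF bij_betw_inv_into[OF bij]] that by blast+
  have inv_decomposition: "(l, ?\<psi> l y, e) \<in> decompositions X k r n"
    if "(l, y, e) \<in> decompositions Y k r (n + 1)" for l y e
  proof -
    from that have l: "1 \<le> l" and y: "y \<in> Y l"
      by (simp_all add: decompositions_def)
    have "sum_mset (?\<psi> l y) + 1 = sum_mset y"
      using shift[OF l inv_into_X[OF l y]] right[OF l y] by simp
    with that show ?thesis
      by (auto simp: decompositions_def inv_into_X[OF l y])
  qed
  show "bij_betw (\<lambda>(l, x, e). (l, \<phi> l x, e)) (decompositions X k r n) (decompositions Y k r (n + 1))"
  proof (rule bij_betw_byWitness[where f' = "\<lambda>(l, y, e). (l, ?\<psi> l y, e)"])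
    show "(\<lambda>(l, y, e). (l, ?\<psi> l y, e)) ` decompositions Y k r (n + 1) \<subseteq> decompositions X k r n"
      using inv_decomposition by auto
  qed (auto simp: decompositions_def left into right shift)
qed

definition largest_odd_index :: "nat multiset \<Rightarrow> nat" where
  "largest_odd_index m = (Max {x \<in> set_mset m. odd x} + 1) div 2"

lemma B_set_compose:
  assumes l: "1 \<le> l" and a: "a \<in> odd_with_max l" and e: "e \<in> even_tails l k r"
  shows "filter_mset odd (a + e) = a" and "filter_mset even (a + e) = e"
    and "largest_odd_index (a + e) = l"
    and "a + e \<in> B_set k r (sum_mset a + sum_mset e)"
proof -
  have a_odd: "odd x \<and> x < 2 * l" if "x \<in># a" for x
    using a that by (simp add: odd_with_max_def)
  have a_max: "2 * l - 1 \<in># a"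
    using a by (simp add: odd_with_max_def)
  have e_even: "even y \<and> count e y = 1 \<and> 2 * l + 2 \<le> y \<and> y \<le> 2 * l + 2 * k - 2" if "y \<in># e" for y
    using e that by (simp add: even_tails_def)
  show "filter_mset odd (a + e) = a"
    by (rule filter_mset_add_eq_left) (use a_odd e_even in auto)
  show even_part: "filter_mset even (a + e) = e"
    using filter_mset_add_eq_left[of e even a] a_odd e_even by (auto simp: add.commute)
  have "{x \<in> set_mset (a + e). odd x} = set_mset a"
    using a_odd e_even by auto
  moreover have "Max (set_mset a) = 2 * l - 1"
    by (rule Max_eqI) (use a_max in \<open>auto dest: a_odd\<close>)
  ultimately show index: "largest_odd_index (a + e) = l"
    using l by (simp add: largest_odd_index_def)
  have "count (a + e) y = count e y" if "even y" for y
    using a_odd that by (auto simp: not_in_iff[symmetric])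
  moreover have "0 < x" if "x \<in># a + e" for x
    using that by (auto dest: a_odd e_even intro: odd_pos)
  ultimately show "a + e \<in> B_set k r (sum_mset a + sum_mset e)"
    using index even_part a_max a_odd e_even e
    by (auto simp: B_set_def partitions_def even_tails_def Let_def largest_odd_index_def)
qed

lemma B_set_decompose:
  assumes m: "m \<in> B_set k r n"
  defines "l \<equiv> largest_odd_index m"
  shows "1 \<le> l" and "filter_mset odd m \<in> odd_with_max l" and "filter_mset even m \<in> even_tails l k r"
    and "sum_mset (filter_mset odd m) + sum_mset (filter_mset even m) = n"
proof -
  let ?S = "{x \<in> set_mset m. odd x}"
  have fin: "finite ?S"
    by simp
  have "?S \<noteq> {}"
    using m by (auto simp: B_set_def)
  with fin have max_in: "Max ?S \<in> ?S"
    by (rule Max_in)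
  have le_max: "x \<le> Max ?S" if "x \<in> ?S" for x
    using fin that by (rule Max_ge)
  from max_in have "odd (Max ?S)"
    by simp
  then have max_eq: "Max ?S = 2 * l - 1" and l: "1 \<le> l"
    unfolding l_def largest_odd_index_def by (auto elim!: oddE)
  then show "1 \<le> l"
    by simp
  show "filter_mset odd m \<in> odd_with_max l"
    using max_in le_max max_eq l by (fastforce simp: odd_with_max_def)
  show "filter_mset even m \<in> even_tails l k r"
    using m by (auto simp: B_set_def even_tails_def Let_def l_def largest_odd_index_def)
  show "sum_mset (filter_mset odd m) + sum_mset (filter_mset even m) = n"
    using m multiset_partition[of m odd] by (auto simp: B_set_def partitions_def simp flip: sum_mset.union)
qed

lemma bij_betw_decompositions_B_set:
  "bij_betw (\<lambda>(l, a, e). a + e) (decompositions odd_with_max k r n) (B_set k r n)"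
proof (rule bij_betw_byWitness[where f' = "\<lambda>m. (largest_odd_index m, filter_mset odd m, filter_mset even m)"])
  have "m = filter_mset odd m + filter_mset even m" for m :: "nat multiset"
    using multiset_partition[of m odd] by (simp add: add.commute)
  then show "\<forall>m \<in> B_set k r n. (\<lambda>(l, a, e). a + e)
               (largest_odd_index m, filter_mset odd m, filter_mset even m) = m"
    by simp
  show "(\<lambda>m. (largest_odd_index m, filter_mset odd m, filter_mset even m)) ` B_set k r n
          \<subseteq> decompositions odd_with_max k r n"
    using B_set_decompose by (auto simp: decompositions_def)
qed (use B_set_compose in \<open>auto simp: decompositions_def\<close>)

lemma C_set_compose:
  assumes l: "1 \<le> l" and d: "d \<in> distinct_small_with_max l" and e: "e \<in> even_tails l k r"
  shows "filter_mset (\<lambda>y. y \<le> 2 * l) (d + e) = d" and "filter_mset (\<lambda>y. 2 * l < y) (d + e) = e"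
    and "(d + e, l) \<in> C_set k r (sum_mset d + sum_mset e)"
proof -
  have d_small: "0 < x \<and> x \<le> 2 * l" if "x \<in># d" for x
    using d that by (simp add: distinct_small_with_max_def)
  have e_even: "even y \<and> count e y = 1 \<and> 2 * l + 2 \<le> y \<and> y \<le> 2 * l + 2 * k - 2" if "y \<in># e" for y
    using e that by (simp add: even_tails_def)
  show "filter_mset (\<lambda>y. y \<le> 2 * l) (d + e) = d"
    by (rule filter_mset_add_eq_left) (auto dest: d_small e_even)
  have d_large: "filter_mset (\<lambda>y. 2 * l < y) d = {#}"
    by (auto dest: d_small)
  have e_large: "filter_mset (\<lambda>y. 2 * l < y) e = e"
    by (rule filter_mset_eq_self) (auto dest: e_even)
  show "filter_mset (\<lambda>y. 2 * l < y) (d + e) = e"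
    by (simp add: d_large e_large)
  have "count (d + e) y = count d y" if "y \<le> 2 * l" for y
    using that by (auto dest: e_even simp: not_in_iff[symmetric])
  moreover have "count (d + e) y = count e y" if "2 * l < y" for y
    using that by (auto dest: d_small simp: not_in_iff[symmetric])
  ultimately show "(d + e, l) \<in> C_set k r (sum_mset d + sum_mset e)"
    using l d e
    by (auto simp: d_large e_large C_set_def partitions_def distinct_small_with_max_def even_tails_def
        dest: d_small e_even)
qed

lemma C_set_decompose:
  assumes m: "(m, l) \<in> C_set k r n"
  shows "1 \<le> l" and "filter_mset (\<lambda>y. y \<le> 2 * l) m \<in> distinct_small_with_max l"
    and "filter_mset (\<lambda>y. 2 * l < y) m \<in> even_tails l k r"
    and "sum_mset (filter_mset (\<lambda>y. y \<le> 2 * l) m) + sum_mset (filter_mset (\<lambda>y. 2 * l < y) m) = n"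
  using m multiset_partition[of m "\<lambda>y. y \<le> 2 * l"]
  by (auto simp: C_set_def partitions_def distinct_small_with_max_def even_tails_def not_le
      simp flip: sum_mset.union)

lemma bij_betw_decompositions_C_set:
  "bij_betw (\<lambda>(l, d, e). (d + e, l)) (decompositions distinct_small_with_max k r n) (C_set k r n)"
proof (rule bij_betw_byWitness[where
      f' = "\<lambda>(m, l). (l, filter_mset (\<lambda>y. y \<le> 2 * l) m, filter_mset (\<lambda>y. 2 * l < y) m)"])
  show "(\<lambda>(m, l). (l, filter_mset (\<lambda>y. y \<le> 2 * l) m, filter_mset (\<lambda>y. 2 * l < y) m)) ` C_set k r n
          \<subseteq> decompositions distinct_small_with_max k r n"
    using C_set_decompose by (auto simp: decompositions_def)
  have "filter_mset (\<lambda>y. y \<le> 2 * l) m + filter_mset (\<lambda>y. 2 * l < y) m = m" for m :: "nat multiset" and l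
    using multiset_partition[of m "\<lambda>y. y \<le> 2 * l"] by (simp add: not_le)
  then show "\<forall>c \<in> C_set k r n. (\<lambda>(l, d, e). (d + e, l))
      ((\<lambda>(m, l). (l, filter_mset (\<lambda>y. y \<le> 2 * l) m, filter_mset (\<lambda>y. 2 * l < y) m)) c) = c"
    by auto
qed (use C_set_compose in \<open>auto simp: decompositions_def\<close>)

lemma card_B_set_eq_card_C_set: "card (B_set k r n) = card (C_set k r (n + 1))"
proof -
  obtain \<phi> where
    bij: "\<And>l. 1 \<le> l \<Longrightarrow> bij_betw (\<phi> l) (odd_with_max l) (distinct_small_with_max l)" and
    shift: "\<And>l a. 1 \<le> l \<Longrightarrow> a \<in> odd_with_max l \<Longrightarrow> sum_mset (\<phi> l a) = sum_mset a + 1"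
    using obtain_bij_odd_with_max_distinct_small_with_max by blast
  have "card (B_set k r n) = card (decompositions odd_with_max k r n)"
    by (rule bij_betw_same_card[OF bij_betw_decompositions_B_set, symmetric])
  also have "\<dots> = card (decompositions distinct_small_with_max k r (n + 1))"
    using bij shift by (rule card_decompositions_shift)
  also have "\<dots> = card (C_set k r (n + 1))"
    by (rule bij_betw_same_card[OF bij_betw_decompositions_C_set])
  finally show ?thesis .
qed

theorem theorem2:
  fixes n k :: nat
  assumes "1 \<le> n" and "1 \<le> k"
  shows "B_e k n = C_e k (n + 1) \<and> B_o k n = C_o k (n + 1)"
  by (simp add: B_e_def B_o_def C_e_def C_o_def card_B_set_eq_card_C_set)

end
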